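(* Let $n\ge 3$ and $a\in\mathbb{C}^\times$ with $a\neq\pm1$. Let $\{e_{\alpha_i},f_{\alpha_i}\mid 1\leq i\leq 2n-1\}$ be Chevalley generators of the simple Lie algebra $\mathfrak{g}$ of type $A_{2n-1}$, with simple roots $\alpha_1,\dots,\alpha_{2n-1}$ labeled along the Dynkin chain $1-2-\cdots-(2n-1)$. Put $$e_{\alpha_{2n}}=a[f_{\alpha_{2n-1}},[\cdots,[f_{\alpha_2},f_{\alpha_1}]\cdots]],\qquad f_{\alpha_{2n}}=a^{-1}[[\cdots[e_{\alpha_1},e_{\alpha_2}],\cdots],e_{\alpha_{2n-1}}].$$ Then there is a Lie algebra homomorphism $\mathrm{gim}(M_n)\to\mathfrak{g}$ with $e_i\mapsto e_{\alpha_i}-f_{\alpha_{n+i}}$ and $f_i\mapsto f_{\alpha_i}-e_{\alpha_{n+i}}$ for $1\le i\le n$.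
   Context: For $n\geq 3$, $M_n=(m_{i,j})$ is the $n\times n$ integer matrix with $m_{i,i}=2$, $m_{i,i+1}=m_{i+1,i}=-1$ ($1\le i\le n-1$), $m_{1,n}=m_{n,1}=1$, all other entries $0$. $\mathrm{gim}(M_n)$ is the complex Lie algebra generated by $e_i,f_i,h_i$ ($1\le i\le n$) with relations: (R1) $[h_i,e_j]=m_{i,j}e_j$, $[h_i,f_j]=-m_{i,j}f_j$, $[e_i,f_i]=h_i$ for all $i,j$; (R2) for $i\ne j$ with $m_{i,j}\le0$: $[e_i,f_j]=0=[f_i,e_j]$, $(\mathrm{ad}\,e_i)^{1-m_{i,j}}e_j=0=(\mathrm{ad}\,f_i)^{1-m_{i,j}}f_j$; (R3) for $i\ne j$ with $m_{i,j}>0$: $[e_i,e_j]=0=[f_i,f_j]$, $(\mathrm{ad}\,e_i)^{m_{i,j}+1}f_j=0=(\mathrm{ad}\,f_i)^{m_{i,j}+1}e_j$. Chevalley generators $e_{\alpha_i},f_{\alpha_i}$ satisfy the standard Serre presentation with $h_{\alpha_i}=[e_{\alpha_i},f_{\alpha_i}]$. *)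

theory Defs
  imports Complex_Main
begin

section \<open>The target: sl_N(C) as N x N complex matrices (indices 0..N-1)\<close>

type_synonym cmat = "nat \<Rightarrow> nat \<Rightarrow> complex"

definition is_mat :: "nat \<Rightarrow> cmat \<Rightarrow> bool" where
  "is_mat N X \<longleftrightarrow> (\<forall>i j. (N \<le> i \<or> N \<le> j) \<longrightarrow> X i j = 0)"

definition mzero :: cmat where "mzero = (\<lambda>i j. 0)"
definition madd :: "cmat \<Rightarrow> cmat \<Rightarrow> cmat" where "madd X Y = (\<lambda>i j. X i j + Y i j)"
definition msub :: "cmat \<Rightarrow> cmat \<Rightarrow> cmat" where "msub X Y = (\<lambda>i j. X i j - Y i j)"
definition msmul :: "complex \<Rightarrow> cmat \<Rightarrow> cmat" where "msmul c X = (\<lambda>i j. c * X i j)"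
definition mmul :: "nat \<Rightarrow> cmat \<Rightarrow> cmat \<Rightarrow> cmat" where
  "mmul N X Y = (\<lambda>i j. \<Sum>k<N. X i k * Y k j)"

definition br :: "nat \<Rightarrow> cmat \<Rightarrow> cmat \<Rightarrow> cmat" where
  "br N X Y = msub (mmul N X Y) (mmul N Y X)"

definition sl :: "nat \<Rightarrow> cmat set" where
  "sl N = {X. is_mat N X \<and> (\<Sum>i<N. X i i) = 0}"

definition is_lie_subalg :: "nat \<Rightarrow> cmat set \<Rightarrow> bool" where
  "is_lie_subalg N S \<longleftrightarrow> S \<subseteq> sl N \<and> mzero \<in> S \<and>
     (\<forall>X\<in>S. \<forall>Y\<in>S. madd X Y \<in> S) \<and> (\<forall>c. \<forall>X\<in>S. msmul c X \<in> S) \<and>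
     (\<forall>X\<in>S. \<forall>Y\<in>S. br N X Y \<in> S)"

definition generates_sl :: "nat \<Rightarrow> cmat set \<Rightarrow> bool" where
  "generates_sl N G \<longleftrightarrow> (\<forall>S. is_lie_subalg N S \<and> G \<subseteq> S \<longrightarrow> S = sl N)"

definition cartanA :: "nat \<Rightarrow> nat \<Rightarrow> int" where
  "cartanA i j = (if i = j then 2 else if i = j + 1 \<or> j = i + 1 then -1 else 0)"

definition chevalley_gens :: "nat \<Rightarrow> (nat \<Rightarrow> cmat) \<Rightarrow> (nat \<Rightarrow> cmat) \<Rightarrow> bool" where
  "chevalley_gens N E F \<longleftrightarrow>
     (\<forall>i\<in>{1..<N}. E i \<in> sl N \<and> F i \<in> sl N) \<and>
     generates_sl N (E ` {1..<N} \<union> F ` {1..<N}) \<and>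
     (\<forall>i\<in>{1..<N}. \<forall>j\<in>{1..<N}.
        br N (br N (E i) (F i)) (br N (E j) (F j)) = mzero \<and>
        br N (br N (E i) (F i)) (E j) = msmul (of_int (cartanA i j)) (E j) \<and>
        br N (br N (E i) (F i)) (F j) = msmul (- of_int (cartanA i j)) (F j) \<and>
        (i \<noteq> j \<longrightarrow>
           br N (E i) (F j) = mzero \<and>
           ((br N (E i)) ^^ nat (1 - cartanA i j)) (E j) = mzero \<and>
           ((br N (F i)) ^^ nat (1 - cartanA i j)) (F j) = mzero))"

fun rnest :: "nat \<Rightarrow> (nat \<Rightarrow> cmat) \<Rightarrow> nat \<Rightarrow> cmat" where
  "rnest N F 0 = mzero"
| "rnest N F (Suc 0) = F 1"
| "rnest N F (Suc (Suc k)) = br N (F (Suc (Suc k))) (rnest N F (Suc k))"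

fun lnest :: "nat \<Rightarrow> (nat \<Rightarrow> cmat) \<Rightarrow> nat \<Rightarrow> cmat" where
  "lnest N E 0 = mzero"
| "lnest N E (Suc 0) = E 1"
| "lnest N E (Suc (Suc k)) = br N (lnest N E (Suc k)) (E (Suc (Suc k)))"

definition Mn :: "nat \<Rightarrow> nat \<Rightarrow> nat \<Rightarrow> int" where
  "Mn n i j = (if i = j then 2
               else if i = j + 1 \<or> j = i + 1 then -1
               else if (i = 1 \<and> j = n) \<or> (i = n \<and> j = 1) then 1
               else 0)"

datatype gen = Ge nat | Gf nat | Gh nat

datatype lterm = Gen gen | LZero | LAdd lterm lterm | LSmul complex lterm | LBr lterm lterm

definition adpow :: "nat \<Rightarrow> lterm \<Rightarrow> lterm \<Rightarrow> lterm" where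
  "adpow k x y = ((LBr x) ^^ k) y"

text \<open>The congruence whose quotient of the term algebra is gim(M_n): generated by the
  complex vector space axioms, bilinearity, alternation, Jacobi, and relations (R1)-(R3).\<close>
inductive gim_cong :: "nat \<Rightarrow> lterm \<Rightarrow> lterm \<Rightarrow> bool" for n where
  refl: "gim_cong n t t"
| sym: "gim_cong n s t \<Longrightarrow> gim_cong n t s"
| trans: "gim_cong n s t \<Longrightarrow> gim_cong n t u \<Longrightarrow> gim_cong n s u"
| cAdd: "gim_cong n s s' \<Longrightarrow> gim_cong n t t' \<Longrightarrow> gim_cong n (LAdd s t) (LAdd s' t')"
| cSmul: "gim_cong n s s' \<Longrightarrow> gim_cong n (LSmul c s) (LSmul c s')"
| cBr: "gim_cong n s s' \<Longrightarrow> gim_cong n t t' \<Longrightarrow> gim_cong n (LBr s t) (LBr s' t')"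
| add_assoc: "gim_cong n (LAdd (LAdd s t) u) (LAdd s (LAdd t u))"
| add_comm: "gim_cong n (LAdd s t) (LAdd t s)"
| add_zero: "gim_cong n (LAdd s LZero) s"
| add_neg: "gim_cong n (LAdd s (LSmul (-1) s)) LZero"
| smul_one: "gim_cong n (LSmul 1 s) s"
| smul_assoc: "gim_cong n (LSmul c (LSmul d s)) (LSmul (c * d) s)"
| smul_dist1: "gim_cong n (LSmul c (LAdd s t)) (LAdd (LSmul c s) (LSmul c t))"
| smul_dist2: "gim_cong n (LSmul (c + d) s) (LAdd (LSmul c s) (LSmul d s))"
| br_addL: "gim_cong n (LBr (LAdd s t) u) (LAdd (LBr s u) (LBr t u))"
| br_addR: "gim_cong n (LBr u (LAdd s t)) (LAdd (LBr u s) (LBr u t))"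
| br_smulL: "gim_cong n (LBr (LSmul c s) t) (LSmul c (LBr s t))"
| br_smulR: "gim_cong n (LBr s (LSmul c t)) (LSmul c (LBr s t))"
| br_alt: "gim_cong n (LBr s s) LZero"
| jacobi: "gim_cong n (LAdd (LBr s (LBr t u)) (LAdd (LBr t (LBr u s)) (LBr u (LBr s t)))) LZero"
| R1_he: "i \<in> {1..n} \<Longrightarrow> j \<in> {1..n} \<Longrightarrow>
     gim_cong n (LBr (Gen (Gh i)) (Gen (Ge j))) (LSmul (of_int (Mn n i j)) (Gen (Ge j)))"
| R1_hf: "i \<in> {1..n} \<Longrightarrow> j \<in> {1..n} \<Longrightarrow>
     gim_cong n (LBr (Gen (Gh i)) (Gen (Gf j))) (LSmul (- of_int (Mn n i j)) (Gen (Gf j)))"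
| R1_ef: "i \<in> {1..n} \<Longrightarrow> gim_cong n (LBr (Gen (Ge i)) (Gen (Gf i))) (Gen (Gh i))"
| R2_ef: "i \<in> {1..n} \<Longrightarrow> j \<in> {1..n} \<Longrightarrow> i \<noteq> j \<Longrightarrow> Mn n i j \<le> 0 \<Longrightarrow>
     gim_cong n (LBr (Gen (Ge i)) (Gen (Gf j))) LZero"
| R2_fe: "i \<in> {1..n} \<Longrightarrow> j \<in> {1..n} \<Longrightarrow> i \<noteq> j \<Longrightarrow> Mn n i j \<le> 0 \<Longrightarrow>
     gim_cong n (LBr (Gen (Gf i)) (Gen (Ge j))) LZero"
| R2_ee: "i \<in> {1..n} \<Longrightarrow> j \<in> {1..n} \<Longrightarrow> i \<noteq> j \<Longrightarrow> Mn n i j \<le> 0 \<Longrightarrow>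
     gim_cong n (adpow (nat (1 - Mn n i j)) (Gen (Ge i)) (Gen (Ge j))) LZero"
| R2_ff: "i \<in> {1..n} \<Longrightarrow> j \<in> {1..n} \<Longrightarrow> i \<noteq> j \<Longrightarrow> Mn n i j \<le> 0 \<Longrightarrow>
     gim_cong n (adpow (nat (1 - Mn n i j)) (Gen (Gf i)) (Gen (Gf j))) LZero"
| R3_ee: "i \<in> {1..n} \<Longrightarrow> j \<in> {1..n} \<Longrightarrow> i \<noteq> j \<Longrightarrow> Mn n i j > 0 \<Longrightarrow>
     gim_cong n (LBr (Gen (Ge i)) (Gen (Ge j))) LZero"
| R3_ff: "i \<in> {1..n} \<Longrightarrow> j \<in> {1..n} \<Longrightarrow> i \<noteq> j \<Longrightarrow> Mn n i j > 0 \<Longrightarrow>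
     gim_cong n (LBr (Gen (Gf i)) (Gen (Gf j))) LZero"
| R3_ef: "i \<in> {1..n} \<Longrightarrow> j \<in> {1..n} \<Longrightarrow> i \<noteq> j \<Longrightarrow> Mn n i j > 0 \<Longrightarrow>
     gim_cong n (adpow (nat (Mn n i j + 1)) (Gen (Ge i)) (Gen (Gf j))) LZero"
| R3_fe: "i \<in> {1..n} \<Longrightarrow> j \<in> {1..n} \<Longrightarrow> i \<noteq> j \<Longrightarrow> Mn n i j > 0 \<Longrightarrow>
     gim_cong n (adpow (nat (Mn n i j + 1)) (Gen (Gf i)) (Gen (Ge j))) LZero"

text \<open>A Lie algebra homomorphism gim(M_n) -> sl_N, presented as a map on terms that is
  constant on gim_cong-classes (so it is a map on the quotient gim(M_n)), complex-linear and
  bracket preserving, with values in sl_N.\<close>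
definition gim_hom :: "nat \<Rightarrow> nat \<Rightarrow> (lterm \<Rightarrow> cmat) \<Rightarrow> bool" where
  "gim_hom n N \<phi> \<longleftrightarrow>
     (\<forall>s t. gim_cong n s t \<longrightarrow> \<phi> s = \<phi> t) \<and>
     (\<forall>t. \<phi> t \<in> sl N) \<and>
     \<phi> LZero = mzero \<and>
     (\<forall>s t. \<phi> (LAdd s t) = madd (\<phi> s) (\<phi> t)) \<and>
     (\<forall>c t. \<phi> (LSmul c t) = msmul c (\<phi> t)) \<and>
     (\<forall>s t. \<phi> (LBr s t) = br N (\<phi> s) (\<phi> t))"

end

theory Submission
  imports Defs
begin

text \<open>A homomorphism out of gim(M_n) is the same as images of its generators satisfying
  (R1)--(R3). Let \<open>\<theta> = \<alpha>_1 + \<dots> + \<alpha>_(2n-1)\<close> be the highest root of \<open>A_(2n-1)\<close>. The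
  vectors \<open>e_\<alpha>_2n\<close> and \<open>f_\<alpha>_2n\<close> are root vectors of \<open>-\<theta>\<close> and \<open>\<theta>\<close>, so \<open>\<alpha>_2n = -\<theta>\<close>
  is the affine node closing the Dynkin chain into a cycle of length \<open>2n\<close>, and the images of
  \<open>e_i, f_i\<close> pair the opposite nodes \<open>i\<close> and \<open>n + i\<close> of this cycle. Hence \<open>h_i\<close> goes to
  \<open>h_\<alpha>_i - h_\<alpha>_(n+i)\<close> for \<open>i < n\<close> and to \<open>h_\<alpha>_n + h_\<theta>\<close> for \<open>i = n\<close>, and these act on
  the images of the \<open>e_j\<close> through \<open>M_n\<close>; its entry \<open>+1\<close> at \<open>(1, n)\<close> is
  \<open>\<langle>\<theta>, \<alpha>_1\<^sup>\<or>\<rangle>\<close>. Every other relation reduces to commutation and Serre relations among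
  the Chevalley generators and the root vectors \<open>[[\<dots>[e_\<alpha>_i, e_\<alpha>_(i+1)], \<dots>], e_\<alpha>_(i+d)]\<close>
  of the chain, which are computed by induction along the chain with the Jacobi identity.\<close>

subsection \<open>The matrix Lie algebra\<close>

lemmas mat_defs = madd_def msub_def msmul_def mzero_def

lemma msmul_msmul [simp]: "msmul c (msmul d x) = msmul (c * d) x" by (simp add: mat_defs fun_eq_iff)
lemma msmul_mzero [simp]: "msmul c mzero = mzero" by (simp add: mat_defs)
lemma msmul_0 [simp]: "msmul 0 x = mzero" by (simp add: mat_defs)
lemma msmul_1 [simp]: "msmul 1 x = x" by (simp add: mat_defs)
lemma madd_mzero_left [simp]: "madd mzero x = x" by (simp add: mat_defs)
lemma madd_mzero_right [simp]: "madd x mzero = x" by (simp add: mat_defs)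
lemma msub_mzero_right [simp]: "msub x mzero = x" by (simp add: mat_defs)
lemma msub_mzero_left [simp]: "msub mzero x = msmul (-1) x" by (simp add: mat_defs)

lemma mmul_assoc: "mmul N (mmul N x y) z = mmul N x (mmul N y z)"
proof -
  have "\<And>i j. (\<Sum>k<N. (\<Sum>l<N. x i l * y l k) * z k j) = (\<Sum>l<N. x i l * (\<Sum>k<N. y l k * z k j))"
    by (simp add: sum_distrib_left sum_distrib_right mult.assoc) (rule sum.swap)
  then show ?thesis by (simp add: mmul_def fun_eq_iff)
qed

lemma mmul_msub_left: "mmul N (msub x y) z = msub (mmul N x z) (mmul N y z)"
  by (simp add: mmul_def msub_def fun_eq_iff algebra_simps sum_subtractf)
lemma mmul_msub_right: "mmul N z (msub x y) = msub (mmul N z x) (mmul N z y)"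
  by (simp add: mmul_def msub_def fun_eq_iff algebra_simps sum_subtractf)
lemma mmul_madd_left: "mmul N (madd x y) z = madd (mmul N x z) (mmul N y z)"
  by (simp add: mmul_def madd_def fun_eq_iff algebra_simps sum.distrib)
lemma mmul_madd_right: "mmul N z (madd x y) = madd (mmul N z x) (mmul N z y)"
  by (simp add: mmul_def madd_def fun_eq_iff algebra_simps sum.distrib)
lemma mmul_msmul_left: "mmul N (msmul c x) z = msmul c (mmul N x z)"
  by (simp add: mmul_def msmul_def fun_eq_iff algebra_simps sum_distrib_left)
lemma mmul_msmul_right: "mmul N z (msmul c x) = msmul c (mmul N z x)"
  by (simp add: mmul_def msmul_def fun_eq_iff algebra_simps sum_distrib_left)
lemma mmul_mzero_left: "mmul N mzero z = mzero"
  by (simp add: mmul_def mzero_def fun_eq_iff)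
lemma mmul_mzero_right: "mmul N z mzero = mzero"
  by (simp add: mmul_def mzero_def fun_eq_iff)

lemma br_msub_left [simp]: "br N (msub x y) z = msub (br N x z) (br N y z)"
  by (simp add: br_def mmul_msub_left mmul_msub_right) (simp add: mat_defs fun_eq_iff)
lemma br_msub_right [simp]: "br N z (msub x y) = msub (br N z x) (br N z y)"
  by (simp add: br_def mmul_msub_left mmul_msub_right) (simp add: mat_defs fun_eq_iff)
lemma br_madd_left [simp]: "br N (madd x y) z = madd (br N x z) (br N y z)"
  by (simp add: br_def mmul_madd_left mmul_madd_right) (simp add: mat_defs fun_eq_iff)
lemma br_madd_right [simp]: "br N z (madd x y) = madd (br N z x) (br N z y)"
  by (simp add: br_def mmul_madd_left mmul_madd_right) (simp add: mat_defs fun_eq_iff)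
lemma br_msmul_left [simp]: "br N (msmul c x) z = msmul c (br N x z)"
  by (simp add: br_def mmul_msmul_left mmul_msmul_right)
     (simp add: mat_defs fun_eq_iff algebra_simps)
lemma br_msmul_right [simp]: "br N z (msmul c x) = msmul c (br N z x)"
  by (simp add: br_def mmul_msmul_left mmul_msmul_right)
     (simp add: mat_defs fun_eq_iff algebra_simps)
lemma br_mzero_left [simp]: "br N mzero z = mzero"
  by (simp add: br_def mmul_mzero_left mmul_mzero_right)
lemma br_mzero_right [simp]: "br N z mzero = mzero"
  by (simp add: br_def mmul_mzero_left mmul_mzero_right)
lemma br_self [simp]: "br N x x = mzero"
  by (simp add: br_def mat_defs fun_eq_iff)

lemma br_antisym: "br N y x = msmul (-1) (br N x y)"
  by (simp add: br_def mat_defs fun_eq_iff)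

lemma br_eq_mzero_commute: "br N x y = mzero \<Longrightarrow> br N y x = mzero"
  by (subst br_antisym) simp

lemma br_jacobi: "br N x (br N y z) = madd (br N (br N x y) z) (br N y (br N x z))"
  unfolding br_def
  by (simp add: mmul_msub_left mmul_msub_right mmul_assoc)
     (simp add: mat_defs fun_eq_iff algebra_simps)

lemma br_jacobi_left: "br N (br N x y) z = msub (br N x (br N y z)) (br N y (br N x z))"
  unfolding br_def
  by (simp add: mmul_msub_left mmul_msub_right mmul_assoc)
     (simp add: mat_defs fun_eq_iff algebra_simps)

lemma br_br_eq_mzero: "br N x y = mzero \<Longrightarrow> br N x z = mzero \<Longrightarrow> br N x (br N y z) = mzero"
  by (subst br_jacobi) simp

lemma eq_msmul_neg_one_imp_mzero: "x = msmul (-1) x \<Longrightarrow> x = mzero"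
  by (simp add: mat_defs fun_eq_iff)

lemma funpow_br_1: "((br N x) ^^ 1) y = br N x y"
  by simp
lemma funpow_br_2: "((br N x) ^^ 2) y = br N x (br N x y)"
  by (simp add: numeral_2_eq_2)

lemma sl_mzero: "mzero \<in> sl N"
  by (simp add: sl_def is_mat_def mzero_def)
lemma sl_madd: "X \<in> sl N \<Longrightarrow> Y \<in> sl N \<Longrightarrow> madd X Y \<in> sl N"
  by (simp add: sl_def is_mat_def madd_def sum.distrib)
lemma sl_msub: "X \<in> sl N \<Longrightarrow> Y \<in> sl N \<Longrightarrow> msub X Y \<in> sl N"
  by (simp add: sl_def is_mat_def msub_def sum_subtractf)
lemma sl_msmul: "X \<in> sl N \<Longrightarrow> msmul c X \<in> sl N"
  by (simp add: sl_def is_mat_def msmul_def sum_distrib_left[symmetric])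

lemma sl_br: assumes "X \<in> sl N" "Y \<in> sl N" shows "br N X Y \<in> sl N"
proof -
  have mx: "is_mat N X" "is_mat N Y" using assms by (auto simp: sl_def)
  have im: "is_mat N (br N X Y)"
    using mx unfolding is_mat_def br_def msub_def mmul_def by auto
  have "(\<Sum>i<N. \<Sum>k<N. X i k * Y k i) = (\<Sum>i<N. \<Sum>k<N. Y i k * X k i)"
    by (subst sum.swap) (simp add: mult.commute)
  then have "(\<Sum>i<N. br N X Y i i) = 0"
    by (simp add: br_def msub_def mmul_def sum_subtractf)
  with im show ?thesis by (simp add: sl_def)
qed

lemma br_br_serre_step:
  assumes bab: "br N b (br N a b) = mzero" and ac: "br N a c = mzero"
    and bbc: "br N b (br N b c) = mzero"
  shows "br N (br N a b) (br N b c) = mzero"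
proof -
  let ?P = "br N a b" and ?Q = "br N a (br N b c)"
  have Pc: "br N ?P c = ?Q" by (subst br_jacobi_left) (simp add: ac)
  have Pb: "br N ?P b = mzero" using bab by (rule br_eq_mzero_commute)
  have "br N ?P (br N b c) = br N b ?Q" by (subst br_jacobi) (simp add: Pb Pc)
  also have "\<dots> = br N (br N b a) (br N b c)" by (subst br_jacobi) (simp add: bbc)
  also have "\<dots> = msmul (-1) (br N ?P (br N b c))" by (subst br_antisym[of N b a]) simp
  finally show ?thesis by (rule eq_msmul_neg_one_imp_mzero)
qed

subsection \<open>Homomorphisms out of gim(M_n)\<close>

primrec eval_lterm :: "nat \<Rightarrow> (gen \<Rightarrow> cmat) \<Rightarrow> lterm \<Rightarrow> cmat" where
  "eval_lterm N g (Gen x) = g x"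
| "eval_lterm N g LZero = mzero"
| "eval_lterm N g (LAdd s t) = madd (eval_lterm N g s) (eval_lterm N g t)"
| "eval_lterm N g (LSmul c t) = msmul c (eval_lterm N g t)"
| "eval_lterm N g (LBr s t) = br N (eval_lterm N g s) (eval_lterm N g t)"

lemma eval_lterm_adpow:
  "eval_lterm N g (adpow k x y) = ((br N (eval_lterm N g x)) ^^ k) (eval_lterm N g y)"
  by (induction k) (simp_all add: adpow_def)

text \<open>Generators with an index outside \<open>{1..n}\<close> occur in no relation of gim(M_n); they are
  sent to zero.\<close>
definition gen_assignment :: "nat \<Rightarrow> nat \<Rightarrow> (nat \<Rightarrow> cmat) \<Rightarrow> (nat \<Rightarrow> cmat) \<Rightarrow> gen \<Rightarrow> cmat" where
  "gen_assignment N n e f x = (case x of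
       Ge i \<Rightarrow> if i \<in> {1..n} then e i else mzero
     | Gf i \<Rightarrow> if i \<in> {1..n} then f i else mzero
     | Gh i \<Rightarrow> if i \<in> {1..n} then br N (e i) (f i) else mzero)"

lemma gim_hom_eval_gen_assignment:
  assumes sl: "\<And>i. i \<in> {1..n} \<Longrightarrow> e i \<in> sl N \<and> f i \<in> sl N"
  and he: "\<And>i j. i \<in> {1..n} \<Longrightarrow> j \<in> {1..n} \<Longrightarrow>
       br N (br N (e i) (f i)) (e j) = msmul (of_int (Mn n i j)) (e j)"
  and hf: "\<And>i j. i \<in> {1..n} \<Longrightarrow> j \<in> {1..n} \<Longrightarrow>
       br N (br N (e i) (f i)) (f j) = msmul (- of_int (Mn n i j)) (f j)"
  and r2ef: "\<And>i j. i \<in> {1..n} \<Longrightarrow> j \<in> {1..n} \<Longrightarrow> i \<noteq> j \<Longrightarrow> Mn n i j \<le> 0 \<Longrightarrow>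
       br N (e i) (f j) = mzero"
  and r2fe: "\<And>i j. i \<in> {1..n} \<Longrightarrow> j \<in> {1..n} \<Longrightarrow> i \<noteq> j \<Longrightarrow> Mn n i j \<le> 0 \<Longrightarrow>
       br N (f i) (e j) = mzero"
  and r2ee: "\<And>i j. i \<in> {1..n} \<Longrightarrow> j \<in> {1..n} \<Longrightarrow> i \<noteq> j \<Longrightarrow> Mn n i j \<le> 0 \<Longrightarrow>
       ((br N (e i)) ^^ nat (1 - Mn n i j)) (e j) = mzero"
  and r2ff: "\<And>i j. i \<in> {1..n} \<Longrightarrow> j \<in> {1..n} \<Longrightarrow> i \<noteq> j \<Longrightarrow> Mn n i j \<le> 0 \<Longrightarrow>
       ((br N (f i)) ^^ nat (1 - Mn n i j)) (f j) = mzero"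
  and r3ee: "\<And>i j. i \<in> {1..n} \<Longrightarrow> j \<in> {1..n} \<Longrightarrow> i \<noteq> j \<Longrightarrow> Mn n i j > 0 \<Longrightarrow>
       br N (e i) (e j) = mzero"
  and r3ff: "\<And>i j. i \<in> {1..n} \<Longrightarrow> j \<in> {1..n} \<Longrightarrow> i \<noteq> j \<Longrightarrow> Mn n i j > 0 \<Longrightarrow>
       br N (f i) (f j) = mzero"
  and r3ef: "\<And>i j. i \<in> {1..n} \<Longrightarrow> j \<in> {1..n} \<Longrightarrow> i \<noteq> j \<Longrightarrow> Mn n i j > 0 \<Longrightarrow>
       ((br N (e i)) ^^ nat (Mn n i j + 1)) (f j) = mzero"
  and r3fe: "\<And>i j. i \<in> {1..n} \<Longrightarrow> j \<in> {1..n} \<Longrightarrow> i \<noteq> j \<Longrightarrow> Mn n i j > 0 \<Longrightarrow>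
       ((br N (f i)) ^^ nat (Mn n i j + 1)) (e j) = mzero"
  shows "gim_hom n N (eval_lterm N (gen_assignment N n e f))"
proof -
  let ?ev = "eval_lterm N (gen_assignment N n e f)"
  have cong: "?ev s = ?ev t" if "gim_cong n s t" for s t
    using that
  proof (induction rule: gim_cong.induct)
    case (add_assoc s t u) then show ?case by (simp add: mat_defs fun_eq_iff algebra_simps)
  next
    case (add_comm s t) then show ?case by (simp add: mat_defs fun_eq_iff algebra_simps)
  next
    case (add_neg s) then show ?case by (simp add: mat_defs fun_eq_iff algebra_simps)
  next
    case (smul_dist1 c s t) then show ?case by (simp add: mat_defs fun_eq_iff algebra_simps)
  next
    case (smul_dist2 c d s) then show ?case by (simp add: mat_defs fun_eq_iff algebra_simps)
  next
    case (jacobi s t u)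
    have "br N (?ev t) (br N (?ev u) (?ev s)) =
      madd (br N (br N (?ev t) (?ev u)) (?ev s)) (br N (?ev u) (br N (?ev t) (?ev s)))"
      by (rule br_jacobi)
    then show ?case
      by (simp add: br_antisym[of N "?ev s" "?ev t"] br_antisym[of N "?ev s" "?ev u"]
             br_antisym[of N "?ev s" "br N (?ev t) (?ev u)"])
         (simp add: mat_defs fun_eq_iff algebra_simps)
  next
    case (R1_he i j) then show ?case using he by (simp add: gen_assignment_def)
  next
    case (R1_hf i j) then show ?case using hf by (simp add: gen_assignment_def)
  next
    case (R1_ef i) then show ?case by (simp add: gen_assignment_def)
  next
    case (R2_ef i j) then show ?case using r2ef by (simp add: gen_assignment_def)
  next
    case (R2_fe i j) then show ?case using r2fe by (simp add: gen_assignment_def)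
  next
    case (R2_ee i j) then show ?case using r2ee by (simp add: gen_assignment_def eval_lterm_adpow)
  next
    case (R2_ff i j) then show ?case using r2ff by (simp add: gen_assignment_def eval_lterm_adpow)
  next
    case (R3_ee i j) then show ?case using r3ee by (simp add: gen_assignment_def)
  next
    case (R3_ff i j) then show ?case using r3ff by (simp add: gen_assignment_def)
  next
    case (R3_ef i j) then show ?case using r3ef by (simp add: gen_assignment_def eval_lterm_adpow)
  next
    case (R3_fe i j) then show ?case using r3fe by (simp add: gen_assignment_def eval_lterm_adpow)
  qed simp_all
  have "gen_assignment N n e f x \<in> sl N" for x
    using sl by (auto simp: gen_assignment_def sl_mzero sl_br split: gen.split)
  then have "?ev t \<in> sl N" for t
    by (induction t) (simp_all add: sl_mzero sl_madd sl_msmul sl_br)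
  with cong show ?thesis unfolding gim_hom_def by simp
qed

subsection \<open>Chevalley relations and root vectors of the chain\<close>

definition coroot :: "nat \<Rightarrow> (nat \<Rightarrow> cmat) \<Rightarrow> (nat \<Rightarrow> cmat) \<Rightarrow> nat \<Rightarrow> cmat" where
  "coroot N E F k = br N (E k) (F k)"

text \<open>With \<open>G = E\<close> this is a root vector of \<open>\<alpha>_i + \<dots> + \<alpha>_(i+d)\<close>, with \<open>G = F\<close>
  one of its negative.\<close>
fun chain_br :: "nat \<Rightarrow> (nat \<Rightarrow> cmat) \<Rightarrow> nat \<Rightarrow> nat \<Rightarrow> cmat" where
  "chain_br N G i 0 = G i"
| "chain_br N G i (Suc d) = br N (chain_br N G i d) (G (i + Suc d))"

lemma chain_br_sl: "(\<And>k. i \<le> k \<Longrightarrow> k \<le> i + d \<Longrightarrow> G k \<in> sl N) \<Longrightarrow> chain_br N G i d \<in> sl N"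
  by (induction d) (auto intro: sl_br)

lemma lnest_eq_chain_br: "lnest N G (Suc d) = chain_br N G 1 d"
  by (induction d) (simp_all add: One_nat_def)

lemma rnest_eq_chain_br: "rnest N G (Suc d) = msmul ((-1)^d) (chain_br N G 1 d)"
proof (induction d)
  case 0 then show ?case by (simp add: One_nat_def)
next
  case (Suc d)
  have "rnest N G (Suc (Suc d)) = br N (G (Suc (Suc d))) (rnest N G (Suc d))" by simp
  also have "\<dots> = msmul ((-1)^Suc d) (chain_br N G 1 (Suc d))"
    by (simp add: Suc br_antisym[of N "G (Suc (Suc d))"] One_nat_def)
  finally show ?case .
qed

text \<open>For \<open>d = N - 2\<close> this is the coroot \<open>h_\<theta>\<close> of the highest root.\<close>
fun coroot_sum :: "nat \<Rightarrow> (nat \<Rightarrow> cmat) \<Rightarrow> (nat \<Rightarrow> cmat) \<Rightarrow> nat \<Rightarrow> cmat" where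
  "coroot_sum N E F 0 = coroot N E F 1"
| "coroot_sum N E F (Suc d) = madd (coroot_sum N E F d) (coroot N E F (Suc (Suc d)))"

lemma br_coroot_sum: "(\<And>m. m \<in> {1..d+1} \<Longrightarrow> br N (coroot N E F m) Z = msmul (w m) Z) \<Longrightarrow>
   br N (coroot_sum N E F d) Z = msmul (\<Sum>m\<in>{1..d+1}. w m) Z"
proof (induction d)
  case 0 then show ?case by simp
next
  case (Suc d)
  have 1: "br N (coroot_sum N E F d) Z = msmul (\<Sum>m\<in>{1..d+1}. w m) Z" using Suc by simp
  have 2: "br N (coroot N E F (Suc (Suc d))) Z = msmul (w (Suc (Suc d))) Z" using Suc.prems by simp
  show ?case by (simp only: coroot_sum.simps br_madd_left 1 2) (simp add: mat_defs fun_eq_iff algebra_simps)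
qed

lemma cartanA_sym: "cartanA i j = cartanA j i"
  by (auto simp: cartanA_def)

lemma sum_cartanA_row: "(\<Sum>p\<in>{i..j}. cartanA m p) =
   (if i \<le> m \<and> m \<le> j then 2 else 0) - (if i \<le> m+1 \<and> m+1 \<le> j then 1 else 0)
   - (if 1 \<le> m \<and> i \<le> m - 1 \<and> m - 1 \<le> j then 1 else 0)"
proof -
  have c: "cartanA m p = (if p = m then 2 else 0) + (if p = m + 1 then -1 else 0)
            + (if p = m - 1 then (if 1 \<le> m then -1 else 0) else 0)" for p
    by (auto simp: cartanA_def)
  show ?thesis
    unfolding c sum.distrib by (simp add: sum.delta')
qed

lemma sum_cartanA_col: "(\<Sum>m\<in>{i..j}. cartanA m p) = (\<Sum>m\<in>{i..j}. cartanA p m)"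
  by (simp add: cartanA_sym)

locale chevalley =
  fixes N :: nat and E F :: "nat \<Rightarrow> cmat"
  assumes sl_E: "i \<in> {1..<N} \<Longrightarrow> E i \<in> sl N"
    and sl_F: "i \<in> {1..<N} \<Longrightarrow> F i \<in> sl N"
    and coroot_br_E: "i \<in> {1..<N} \<Longrightarrow> j \<in> {1..<N} \<Longrightarrow>
      br N (coroot N E F i) (E j) = msmul (of_int (cartanA i j)) (E j)"
    and coroot_br_F: "i \<in> {1..<N} \<Longrightarrow> j \<in> {1..<N} \<Longrightarrow>
      br N (coroot N E F i) (F j) = msmul (- of_int (cartanA i j)) (F j)"
    and br_E_F: "i \<in> {1..<N} \<Longrightarrow> j \<in> {1..<N} \<Longrightarrow> i \<noteq> j \<Longrightarrow> br N (E i) (F j) = mzero"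
    and serre_E: "i \<in> {1..<N} \<Longrightarrow> j \<in> {1..<N} \<Longrightarrow> i \<noteq> j \<Longrightarrow>
      ((br N (E i)) ^^ nat (1 - cartanA i j)) (E j) = mzero"
    and serre_F: "i \<in> {1..<N} \<Longrightarrow> j \<in> {1..<N} \<Longrightarrow> i \<noteq> j \<Longrightarrow>
      ((br N (F i)) ^^ nat (1 - cartanA i j)) (F j) = mzero"

lemma chevalley_if_gens: "chevalley_gens N E F \<Longrightarrow> chevalley N E F"
  unfolding chevalley_gens_def chevalley_def coroot_def by blast

lemma coroot_swap: "coroot N F E m = msmul (-1) (coroot N E F m)"
  unfolding coroot_def by (rule br_antisym)

context chevalley
begin

lemma chevalley_swap: "chevalley N F E"
proof (rule chevalley.intro, goal_cases)
  case (3 i j)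
  then show ?case using coroot_br_F[of i j] by (simp add: coroot_swap[of N F E])
next
  case (4 i j)
  then show ?case using coroot_br_E[of i j] by (simp add: coroot_swap[of N F E])
next
  case (5 i j)
  then show ?case using br_E_F[of j i] by (auto intro: br_eq_mzero_commute)
qed (simp_all add: sl_E sl_F serre_E serre_F)

lemma br_F_E: "i \<in> {1..<N} \<Longrightarrow> j \<in> {1..<N} \<Longrightarrow> i \<noteq> j \<Longrightarrow> br N (F i) (E j) = mzero"
  using chevalley.br_E_F[OF chevalley_swap] .

lemma br_F_E_self: "br N (F i) (E i) = msmul (-1) (coroot N E F i)"
  by (subst br_antisym) (simp add: coroot_def)

lemma br_E_E_far: "i \<in> {1..<N} \<Longrightarrow> j \<in> {1..<N} \<Longrightarrow> i \<noteq> j \<Longrightarrow> \<not> (i = j + 1 \<or> j = i + 1) \<Longrightarrow>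
   br N (E i) (E j) = mzero"
  using serre_E[of i j] by (simp add: cartanA_def)

lemma br_F_F_far: "i \<in> {1..<N} \<Longrightarrow> j \<in> {1..<N} \<Longrightarrow> i \<noteq> j \<Longrightarrow> \<not> (i = j + 1 \<or> j = i + 1) \<Longrightarrow>
   br N (F i) (F j) = mzero"
  using serre_F[of i j] by (simp add: cartanA_def)

lemma serre_E_adj: "i \<in> {1..<N} \<Longrightarrow> j \<in> {1..<N} \<Longrightarrow> (i = j + 1 \<or> j = i + 1) \<Longrightarrow>
   br N (E i) (br N (E i) (E j)) = mzero"
  using serre_E[of i j] by (auto simp: cartanA_def numeral_2_eq_2)

lemma serre_F_adj: "i \<in> {1..<N} \<Longrightarrow> j \<in> {1..<N} \<Longrightarrow> (i = j + 1 \<or> j = i + 1) \<Longrightarrow>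
   br N (F i) (br N (F i) (F j)) = mzero"
  using serre_F[of i j] by (auto simp: cartanA_def numeral_2_eq_2)

lemma br_F_chain_outside: "m \<in> {1..<N} \<Longrightarrow> 1 \<le> i \<Longrightarrow> i + d < N \<Longrightarrow> (m < i \<or> i + d < m) \<Longrightarrow>
   br N (F m) (chain_br N E i d) = mzero"
proof (induction d)
  case 0 then show ?case by (simp only: chain_br.simps) (rule br_F_E, auto)
next
  case (Suc d)
  have 1: "br N (F m) (chain_br N E i d) = mzero" apply (rule Suc.IH) using Suc.prems by auto
  have 2: "br N (F m) (E (i + Suc d)) = mzero" using Suc.prems by (intro br_F_E) auto
  show ?case using 1 2 by (simp only: chain_br.simps br_br_eq_mzero)
qed

lemma br_E_chain_far: "m \<in> {1..<N} \<Longrightarrow> 1 \<le> i \<Longrightarrow> i + d < N \<Longrightarrow> (m + 2 \<le> i \<or> i + d + 2 \<le> m) \<Longrightarrow>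
   br N (E m) (chain_br N E i d) = mzero"
proof (induction d)
  case 0 then show ?case by (simp only: chain_br.simps) (rule br_E_E_far, auto)
next
  case (Suc d)
  have 1: "br N (E m) (chain_br N E i d) = mzero" apply (rule Suc.IH) using Suc.prems by auto
  have 2: "br N (E m) (E (i + Suc d)) = mzero" using Suc.prems by (intro br_E_E_far) auto
  show ?case using 1 2 by (simp only: chain_br.simps br_br_eq_mzero)
qed

lemma serre_E_chain_next: "1 \<le> i \<Longrightarrow> i + d + 1 < N \<Longrightarrow>
   br N (E (i + d + 1)) (br N (E (i + d + 1)) (chain_br N E i d)) = mzero"
proof (cases d)
  case 0
  then show "1 \<le> i \<Longrightarrow> i + d + 1 < N \<Longrightarrow> ?thesis" by (simp add: serre_E_adj)
next
  case (Suc d')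
  assume i: "1 \<le> i" "i + d + 1 < N"
  let ?A = "chain_br N E i d'" and ?b = "E (i + d)" and ?c = "E (i + d + 1)"
  have cA: "br N ?c ?A = mzero" using i Suc by (intro br_E_chain_far) auto
  have ccb: "br N ?c (br N ?c ?b) = mzero" using i Suc by (intro serre_E_adj) auto
  have "br N ?c (br N ?A ?b) = br N ?A (br N ?c ?b)"
    by (subst br_jacobi) (simp only: cA br_mzero_left madd_mzero_left)
  then have "br N ?c (br N ?c (br N ?A ?b)) = mzero"
    by (simp only:)
       (subst br_jacobi, simp only: cA ccb br_mzero_left br_mzero_right madd_mzero_left)
  then show ?thesis using Suc by simp
qed

lemma br_E_chain_inside: "1 \<le> i \<Longrightarrow> i + d < N \<Longrightarrow> i \<le> m \<Longrightarrow> m \<le> i + d \<Longrightarrow>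
   br N (E m) (chain_br N E i d) = mzero"
proof (induction d arbitrary: m)
  case 0
  then show ?case by simp
next
  case (Suc d)
  let ?L = "chain_br N E i d" and ?t = "i + Suc d"
  consider "m < i + d" | "m = i + d" | "m = ?t" using Suc.prems by linarith
  then show ?case
  proof cases
    case 1
    have "br N (E m) ?L = mzero" using Suc 1 by simp
    moreover have "br N (E m) (E ?t) = mzero" using Suc.prems 1 by (intro br_E_E_far) auto
    ultimately show ?thesis by (simp add: br_br_eq_mzero)
  next
    case 2
    show ?thesis
    proof (cases d)
      case 0
      then show ?thesis using Suc.prems 2 by (simp add: serre_E_adj)
    next
      case (Suc d')
      let ?A = "chain_br N E i d'"
      have L: "?L = br N ?A (E m)" using Suc 2 by simp
      have "br N (E m) (br N ?A (E m)) = mzero" using Suc.IH[of m] Suc.prems 2 L by simp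
      moreover have "br N ?A (E ?t) = mzero"
        using Suc.prems Suc 2 by (intro br_E_chain_far[THEN br_eq_mzero_commute]) auto
      moreover have "br N (E m) (br N (E m) (E ?t)) = mzero"
        using Suc.prems 2 by (intro serre_E_adj) auto
      ultimately have "br N (br N ?A (E m)) (br N (E m) (E ?t)) = mzero" by (rule br_br_serre_step)
      then show ?thesis using \<open>br N (E m) (br N ?A (E m)) = mzero\<close>
        by (simp add: L br_jacobi[of N "E m" "br N ?A (E m)"])
    qed
  next
    case 3
    have "br N (E ?t) (br N (E ?t) ?L) = mzero"
      using serre_E_chain_next[of i d] Suc.prems by simp
    then show ?thesis using 3 by (simp add: br_antisym[of N ?L])
  qed
qed

lemma coroot_br_chain: "m \<in> {1..<N} \<Longrightarrow> 1 \<le> i \<Longrightarrow> i + d < N \<Longrightarrow>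
   br N (coroot N E F m) (chain_br N E i d) = msmul (of_int (\<Sum>p\<in>{i..i+d}. cartanA m p)) (chain_br N E i d)"
proof (induction d)
  case 0 then show ?case by (simp add: coroot_br_E)
next
  case (Suc d)
  have "br N (coroot N E F m) (chain_br N E i (Suc d)) =
     madd (br N (br N (coroot N E F m) (chain_br N E i d)) (E (i + Suc d)))
          (br N (chain_br N E i d) (br N (coroot N E F m) (E (i + Suc d))))"
    unfolding chain_br.simps by (rule br_jacobi)
  also have "\<dots> = msmul (of_int (\<Sum>p\<in>{i..i+Suc d}. cartanA m p)) (chain_br N E i (Suc d))"
    using Suc by (simp add: coroot_br_E) (simp add: mat_defs fun_eq_iff algebra_simps)
  finally show ?case .
qed

lemma br_chain_chain_Suc: "1 \<le> i \<Longrightarrow> i + d + 1 < N \<Longrightarrow>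
   br N (chain_br N E i d) (chain_br N E i (Suc d)) = mzero"
proof (induction d)
  case 0
  then show ?case by (simp add: serre_E_adj)
next
  case (Suc d)
  let ?A = "chain_br N E i d" and ?b = "E (i + Suc d)" and ?c = "E (i + Suc (Suc d))"
  let ?P = "br N ?A ?b"
  have PA: "br N ?P ?A = mzero" using Suc by (simp add: br_eq_mzero_commute)
  have bP: "br N ?b ?P = mzero" using Suc.prems br_E_chain_inside[of i "Suc d" "i + Suc d"] by simp
  have Ac: "br N ?A ?c = mzero"
    using Suc.prems by (intro br_E_chain_far[THEN br_eq_mzero_commute]) auto
  have bbc: "br N ?b (br N ?b ?c) = mzero" using Suc.prems by (intro serre_E_adj) auto
  have Pc: "br N ?P ?c = br N ?A (br N ?b ?c)"
    by (subst br_jacobi_left) (simp only: Ac br_mzero_right msub_mzero_right)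
  have Pbc: "br N ?P (br N ?b ?c) = mzero" using bP Ac bbc by (rule br_br_serre_step)
  have "br N ?P (br N ?P ?c) = mzero"
    unfolding Pc by (subst br_jacobi) (simp only: PA Pbc br_mzero_left br_mzero_right madd_mzero_left)
  then show ?case by simp
qed

lemma br_F_chain_first: "1 \<le> i \<Longrightarrow> i + Suc d < N \<Longrightarrow>
   br N (F i) (chain_br N E i (Suc d)) = chain_br N E (Suc i) d"
proof (induction d)
  case 0
  have "br N (F i) (br N (E i) (E (Suc i))) = madd (br N (br N (F i) (E i)) (E (Suc i)))
     (br N (E i) (br N (F i) (E (Suc i))))" by (rule br_jacobi)
  also have "\<dots> = E (Suc i)"
  proof -
    have a: "br N (F i) (E (Suc i)) = mzero" using 0 by (intro br_F_E) auto
    have b: "br N (coroot N E F i) (E (Suc i)) = msmul (of_int (cartanA i (Suc i))) (E (Suc i))"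
      using 0 by (intro coroot_br_E) auto
    show ?thesis by (simp add: br_F_E_self a b cartanA_def)
  qed
  finally show ?case by simp
next
  case (Suc d)
  have "br N (F i) (chain_br N E i (Suc (Suc d))) =
     madd (br N (br N (F i) (chain_br N E i (Suc d))) (E (i + Suc (Suc d))))
          (br N (chain_br N E i (Suc d)) (br N (F i) (E (i + Suc (Suc d)))))"
    unfolding chain_br.simps by (rule br_jacobi)
  also have "\<dots> = chain_br N E (Suc i) (Suc d)"
  proof -
    have a: "br N (F i) (E (i + Suc (Suc d))) = mzero" using Suc.prems by (intro br_F_E) auto
    have b: "br N (F i) (chain_br N E i (Suc d)) = chain_br N E (Suc i) d" using Suc by simp
    show ?thesis by (simp only: a b br_mzero_right madd_mzero_right) simp
  qed
  finally show ?case .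
qed

lemma br_F_chain_last: "1 \<le> i \<Longrightarrow> i + Suc d < N \<Longrightarrow>
  br N (F (i + Suc d)) (chain_br N E i (Suc d)) = msmul (-1) (chain_br N E i d)"
proof -
  assume a: "1 \<le> i" "i + Suc d < N"
  have fA: "br N (F (i + Suc d)) (chain_br N E i d) = mzero"
    using a by (intro br_F_chain_outside) auto
  have hA: "br N (coroot N E F (i + Suc d)) (chain_br N E i d) = msmul (-1) (chain_br N E i d)"
    using a by (simp add: coroot_br_chain sum_cartanA_row)
  have "br N (F (i + Suc d)) (chain_br N E i (Suc d)) =
     madd (br N (br N (F (i + Suc d)) (chain_br N E i d)) (E (i + Suc d)))
          (br N (chain_br N E i d) (br N (F (i + Suc d)) (E (i + Suc d))))"
    unfolding chain_br.simps by (rule br_jacobi)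
  also have "\<dots> = msmul (-1) (chain_br N E i d)"
    by (simp only: fA br_F_E_self br_antisym[of N "chain_br N E i d" "coroot N E F (i + Suc d)"] hA br_mzero_left
         madd_mzero_left br_msmul_right msmul_msmul) simp
  finally show ?thesis .
qed

lemma br_chain_chain_shift: "1 \<le> i \<Longrightarrow> i + Suc d < N \<Longrightarrow>
   br N (chain_br N E i (Suc d)) (chain_br N E (Suc i) d) = mzero"
proof (induction d)
  case 0
  have Ei: "br N (E (Suc i)) (chain_br N E i 1) = mzero" using 0 by (intro br_E_chain_inside) auto
  have "br N (chain_br N E i 1) (E (Suc i)) = mzero" using Ei by (rule br_eq_mzero_commute)
  then show ?case by simp
next
  case (Suc d)
  define A where "A = chain_br N E i (Suc d)"
  define B where "B = chain_br N E (Suc i) d"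
  define c where "c = E (i + Suc (Suc d))"
  define U where "U = br N A c"
  define V where "V = br N B c"
  have U: "chain_br N E i (Suc (Suc d)) = U" by (simp add: U_def A_def c_def)
  have V: "chain_br N E (Suc i) (Suc d) = V" by (simp add: V_def B_def c_def)
  have AB: "br N A B = mzero" using Suc by (simp add: A_def B_def)
  have BA: "br N B A = mzero" using AB by (rule br_eq_mzero_commute)
  have Uc: "br N U c = mzero" unfolding U[symmetric] c_def
    apply (rule br_eq_mzero_commute, rule br_E_chain_inside) using Suc.prems by auto
  have Vc: "br N V c = mzero" unfolding V[symmetric] c_def
    apply (rule br_eq_mzero_commute, rule br_E_chain_inside) using Suc.prems by auto
  have e1: "br N U V = br N (br N U B) c" unfolding V_def by (subst br_jacobi) (simp add: Uc)
  have BU: "br N B U = br N A V" unfolding U_def V_def by (subst br_jacobi) (simp add: BA)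
  have e2: "br N U B = msmul (-1) (br N A V)"
    by (subst br_antisym) (simp add: BU)
  have e3: "br N (br N A V) c = br N U V"
    by (subst br_jacobi_left) (simp add: Vc U_def[symmetric] br_antisym[of N V U])
  have "br N U V = br N (br N U B) c" by (rule e1)
  also have "\<dots> = msmul (-1) (br N (br N A V) c)" by (simp add: e2)
  also have "\<dots> = msmul (-1) (br N U V)" by (simp add: e3)
  finally have "br N U V = mzero" by (rule eq_msmul_neg_one_imp_mzero)
  then show ?case unfolding U V .
qed

lemma br_F_chain_interior: "1 \<le> i \<Longrightarrow> i + d < N \<Longrightarrow> i < m \<Longrightarrow> m < i + d \<Longrightarrow>
   br N (F m) (chain_br N E i d) = mzero"
proof (induction d)
  case 0 then show ?case by simp
next
  case (Suc d)
  have Fm_E: "br N (F m) (E (i + Suc d)) = mzero" using Suc.prems by (intro br_F_E) auto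
  have "br N (F m) (chain_br N E i (Suc d)) =
     madd (br N (br N (F m) (chain_br N E i d)) (E (i + Suc d)))
          (br N (chain_br N E i d) (br N (F m) (E (i + Suc d))))"
    unfolding chain_br.simps by (rule br_jacobi)
  also have "\<dots> = br N (br N (F m) (chain_br N E i d)) (E (i + Suc d))"
    by (simp only: Fm_E br_mzero_right madd_mzero_right)
  also have "\<dots> = mzero"
  proof (cases "m < i + d")
    case True then show ?thesis using Suc by simp
  next
    case False
    then have m: "m = i + d" using Suc.prems by simp
    then obtain d' where d: "d = Suc d'" using Suc.prems by (cases d) auto
    have "br N (E (i + Suc d)) (chain_br N E i d') = mzero"
      using Suc.prems d by (intro br_E_chain_far) auto
    then show ?thesis using Suc.prems m d br_F_chain_last[of i d'] by (simp add: br_eq_mzero_commute)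
  qed
  finally show ?case .
qed

lemma coroot_br_chain_F: "m \<in> {1..<N} \<Longrightarrow> 1 \<le> i \<Longrightarrow> i + d < N \<Longrightarrow>
   br N (coroot N E F m) (chain_br N F i d) = msmul (- of_int (\<Sum>p\<in>{i..i+d}. cartanA m p)) (chain_br N F i d)"
proof -
  assume a: "m \<in> {1..<N}" "1 \<le> i" "i + d < N"
  have s: "br N (coroot N F E m) (chain_br N F i d) = msmul (of_int (\<Sum>p\<in>{i..i+d}. cartanA m p)) (chain_br N F i d)"
    using chevalley.coroot_br_chain[OF chevalley_swap a] .
  have "br N (coroot N E F m) (chain_br N F i d) = msmul (-1) (br N (coroot N F E m) (chain_br N F i d))"
    by (simp add: coroot_swap[of N F E])
  also have "\<dots> = msmul (- of_int (\<Sum>p\<in>{i..i+d}. cartanA m p)) (chain_br N F i d)"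
    by (simp add: s)
  finally show ?thesis .
qed

lemma br_chain_E_chain_F: "1 + d < N \<Longrightarrow>
   br N (chain_br N E 1 d) (chain_br N F 1 d) = msmul ((-1)^d) (coroot_sum N E F d)"
proof (induction d)
  case 0 then show ?case by (simp add: coroot_def)
next
  case (Suc d)
  define A where "A = chain_br N E 1 d"
  define B where "B = chain_br N F 1 d"
  define e where "e = E (Suc (Suc d))"
  define f where "f = F (Suc (Suc d))"
  define Z where "Z = br N B f"
  have LA: "chain_br N E 1 (Suc d) = br N A e" by (simp add: A_def e_def)
  have LB: "chain_br N F 1 (Suc d) = Z" by (simp add: B_def f_def Z_def)
  have AB: "br N A B = msmul ((-1)^d) (coroot_sum N E F d)" using Suc by (simp add: A_def B_def)
  have eB: "br N e B = mzero" unfolding e_def B_def using Suc.prems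
    by (intro chevalley.br_F_chain_outside[OF chevalley_swap]) auto
  have s: "(\<Sum>p\<in>{1..1+d}. cartanA (Suc (Suc d)) p) = -1" by (subst sum_cartanA_row) simp
  have hB: "br N (coroot N E F (Suc (Suc d))) B = B"
    unfolding B_def using Suc.prems coroot_br_chain_F[of "Suc (Suc d)" 1 d] by (simp only: s) simp
  have ef: "br N e f = coroot N E F (Suc (Suc d))" by (simp add: e_def f_def coroot_def)
  have eZ: "br N e Z = msmul (-1) B" unfolding Z_def
    by (subst br_jacobi) (simp add: eB ef br_antisym[of N B "coroot N E F (Suc (Suc d))"] hB)
  have fA: "br N f A = mzero"
    unfolding f_def A_def using Suc.prems by (intro br_F_chain_outside) auto
  have Af: "br N A f = mzero" using fA by (rule br_eq_mzero_commute)
  have Hf: "br N (coroot_sum N E F d) f = f"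
  proof -
    have "br N (coroot_sum N E F d) f = msmul (\<Sum>m\<in>{1..d+1}. - of_int (cartanA m (Suc (Suc d)))) f"
      unfolding f_def using Suc.prems by (intro br_coroot_sum) (simp add: coroot_br_F)
    also have "\<dots> = f"
    proof -
      have "(\<Sum>m\<in>{1..d+1}. cartanA m (Suc (Suc d))) = -1"
        by (simp only: sum_cartanA_col, subst sum_cartanA_row) simp
      then have "(\<Sum>m\<in>{1..d+1}. - (of_int (cartanA m (Suc (Suc d))) :: complex)) = 1"
        by (simp add: sum_negf flip: of_int_sum)
      then show ?thesis by simp
    qed
    finally show ?thesis .
  qed
  have AZ: "br N A Z = msmul ((-1)^d) f" unfolding Z_def
    by (subst br_jacobi) (simp add: AB Af Hf)
  have "br N (chain_br N E 1 (Suc d)) (chain_br N F 1 (Suc d)) = br N (br N A e) Z"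
    by (simp only: LA LB)
  also have "\<dots> = msub (br N A (br N e Z)) (br N e (br N A Z))" by (rule br_jacobi_left)
  also have "\<dots> = msmul ((-1)^Suc d) (coroot_sum N E F (Suc d))"
    by (simp add: eZ AB AZ ef) (simp add: mat_defs fun_eq_iff algebra_simps)
  finally show ?case .
qed

end

subsection \<open>The images of the generators of gim(M_n)\<close>

text \<open>The image \<open>e_\<alpha>_i - f_\<alpha>_(n+i)\<close> of \<open>e_i\<close>, where \<open>f_\<alpha>_2n = b [[\<dots>[e_\<alpha>_1, e_\<alpha>_2], \<dots>], e_\<alpha>_(2n-1)]\<close>;
  exchanging \<open>E\<close> and \<open>F\<close> gives the image of \<open>f_i\<close>.\<close>
definition folded_gen ::
  "nat \<Rightarrow> (nat \<Rightarrow> cmat) \<Rightarrow> (nat \<Rightarrow> cmat) \<Rightarrow> nat \<Rightarrow> complex \<Rightarrow> nat \<Rightarrow> cmat" where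
  "folded_gen N E F n b i =
     (if i = n then msub (E n) (msmul b (chain_br N E 1 (N - 2))) else msub (E i) (F (n + i)))"

locale folding = chevalley +
  fixes n :: nat and b c :: complex
  assumes N_eq_2n: "N = 2 * n" and n_ge_3: "3 \<le> n" and bc_eq_1: "b * c = 1"
begin

lemma folding_swap: "folding N F E n c b"
  unfolding folding_def folding_axioms_def using chevalley_swap N_eq_2n n_ge_3 bc_eq_1
  by (simp add: mult.commute)

abbreviation Etop where "Etop \<equiv> chain_br N E 1 (N - 2)"
abbreviation Ftop where "Ftop \<equiv> chain_br N F 1 (N - 2)"
definition Htop where "Htop = coroot_sum N E F (N - 2)"

text \<open>The pairing \<open>\<langle>\<theta>, \<alpha>_k\<^sup>\<or>\<rangle>\<close> of the highest root with the simple coroots.\<close>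
definition theta_pairing :: "nat \<Rightarrow> complex" where
  "theta_pairing k = (if k = 1 then 1 else 0) + (if k = N - 1 then 1 else 0)"

lemma N_ge_6: "6 \<le> N" using N_eq_2n n_ge_3 by simp

lemma N_arith: "1 + (N - 2) = N - 1" "N - 2 + 1 = N - 1" "N - 2 = Suc (N - 3)" "n + (n - 1) = N - 1"
  using N_eq_2n n_ge_3 by simp_all

lemma sum_cartanA_row_eq_theta_pairing: "k \<in> {1..<N} \<Longrightarrow>
   of_int (\<Sum>p\<in>{1..N-1}. cartanA k p) = theta_pairing k"
  using N_ge_6 by (auto simp: sum_cartanA_row theta_pairing_def)

lemma coroot_br_Etop: "k \<in> {1..<N} \<Longrightarrow> br N (coroot N E F k) Etop = msmul (theta_pairing k) Etop"
proof -
  assume k: "k \<in> {1..<N}"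
  have "br N (coroot N E F k) Etop = msmul (of_int (\<Sum>p\<in>{1..1+(N-2)}. cartanA k p)) Etop"
    by (rule coroot_br_chain) (use k N_ge_6 in auto)
  then show ?thesis by (simp only: N_arith(1) sum_cartanA_row_eq_theta_pairing[OF k])
qed

lemma coroot_br_Ftop: "k \<in> {1..<N} \<Longrightarrow> br N (coroot N E F k) Ftop = msmul (- theta_pairing k) Ftop"
proof -
  assume k: "k \<in> {1..<N}"
  have "br N (coroot N E F k) Ftop = msmul (- of_int (\<Sum>p\<in>{1..1+(N-2)}. cartanA k p)) Ftop"
    by (rule coroot_br_chain_F) (use k N_ge_6 in auto)
  then show ?thesis by (simp only: N_arith(1) sum_cartanA_row_eq_theta_pairing[OF k])
qed

lemma br_E_Etop: "k \<in> {1..<N} \<Longrightarrow> br N (E k) Etop = mzero"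
  using N_ge_6 by (intro br_E_chain_inside) auto

lemma br_F_Etop_mid: "2 \<le> k \<Longrightarrow> k \<le> N - 2 \<Longrightarrow> br N (F k) Etop = mzero"
  using N_ge_6 by (intro br_F_chain_interior) auto

lemma br_Etop_Ftop: "br N Etop Ftop = Htop"
proof -
  have "even (N - 2)" using N_eq_2n by simp
  then show ?thesis unfolding Htop_def using N_ge_6 br_chain_E_chain_F[of "N-2"] by simp
qed

lemma Htop_br_E: "j \<in> {1..<N} \<Longrightarrow> br N Htop (E j) = msmul (theta_pairing j) (E j)"
proof -
  assume j: "j \<in> {1..<N}"
  have "br N Htop (E j) = msmul (\<Sum>m\<in>{1..N-2+1}. of_int (cartanA m j)) (E j)"
    unfolding Htop_def apply (rule br_coroot_sum) apply (rule coroot_br_E) using j N_ge_6 by auto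
  also have "(\<Sum>m\<in>{1..N-2+1}. (of_int (cartanA m j) :: complex)) = theta_pairing j"
    unfolding N_arith(2) using sum_cartanA_row_eq_theta_pairing[OF j] by (simp add: sum_cartanA_col flip: of_int_sum)
  finally show ?thesis .
qed

lemma Htop_br_F: "j \<in> {1..<N} \<Longrightarrow> br N Htop (F j) = msmul (- theta_pairing j) (F j)"
proof -
  assume j: "j \<in> {1..<N}"
  have "br N Htop (F j) = msmul (\<Sum>m\<in>{1..N-2+1}. - of_int (cartanA m j)) (F j)"
    unfolding Htop_def apply (rule br_coroot_sum) apply (rule coroot_br_F) using j N_ge_6 by auto
  also have "(\<Sum>m\<in>{1..N-2+1}. - (of_int (cartanA m j) :: complex)) = - theta_pairing j"
    unfolding N_arith(2) using sum_cartanA_row_eq_theta_pairing[OF j] by (simp add: sum_negf sum_cartanA_col flip: of_int_sum)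
  finally show ?thesis .
qed

lemma sum_theta_pairing: "(\<Sum>m\<in>{1..N-2+1}. theta_pairing m) = 2"
proof -
  have "(\<Sum>m\<in>{1..N-2+1}. theta_pairing m) = (\<Sum>m\<in>{1..N-1}. (if m = 1 then 1 else 0) + (if m = N - 1 then 1 else 0))"
    unfolding N_arith(2) by (simp add: theta_pairing_def)
  also have "\<dots> = 2" using N_ge_6 by (simp add: sum.distrib sum.delta)
  finally show ?thesis .
qed

lemma Htop_br_Etop: "br N Htop Etop = msmul 2 Etop"
proof -
  have "br N Htop Etop = msmul (\<Sum>m\<in>{1..N-2+1}. theta_pairing m) Etop"
    unfolding Htop_def apply (rule br_coroot_sum) apply (rule coroot_br_Etop) using N_ge_6 by auto
  then show ?thesis by (simp only: sum_theta_pairing)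
qed

lemma br_F1_Etop: "br N (F 1) Etop = chain_br N E 2 (N - 3)"
proof -
  show ?thesis using N_ge_6 N_arith(3) br_F_chain_first[of 1 "N-3"] by (simp add: numeral_2_eq_2)
qed

lemma br_F1_F1_Etop: "br N (F 1) (br N (F 1) Etop) = mzero"
  unfolding br_F1_Etop using N_ge_6 by (intro br_F_chain_outside) auto

lemma br_Flast_Etop: "br N (F (N - 1)) Etop = msmul (-1) (chain_br N E 1 (N - 3))"
proof -
  have "1 + Suc (N - 3) = N - 1" using N_ge_6 by simp
  then show ?thesis using N_arith(3) using N_ge_6 br_F_chain_last[of 1 "N-3"] by simp
qed

lemma br_Etop_chain_prev: "br N Etop (chain_br N E 1 (N - 3)) = mzero"
proof -
  have "br N (chain_br N E 1 (N - 3)) Etop = mzero" using N_ge_6 N_arith(3) br_chain_chain_Suc[of 1 "N-3"] by simp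
  then show ?thesis by (rule br_eq_mzero_commute)
qed

lemma br_E_chain_prev: "k \<in> {1..N-2} \<Longrightarrow> br N (E k) (chain_br N E 1 (N - 3)) = mzero"
  using N_ge_6 by (intro br_E_chain_inside) auto

lemma br_Flast_chain_prev: "br N (F (N-1)) (chain_br N E 1 (N - 3)) = mzero"
  using N_ge_6 by (intro br_F_chain_outside) auto

lemma br_Etop_Etop_F1: "br N Etop (br N Etop (F 1)) = mzero"
proof -
  have "br N Etop (chain_br N E 2 (N - 3)) = mzero" using N_ge_6 N_arith(3) br_chain_chain_shift[of 1 "N-3"]
    by (simp add: numeral_2_eq_2)
  moreover have s: "br N Etop (F 1) = msmul (-1) (chain_br N E 2 (N - 3))"
    by (subst br_antisym) (simp only: br_F1_Etop)
  ultimately show ?thesis by (simp only: s br_msmul_right) simp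
qed

declare One_nat_def [simp del]

abbreviation "e_hat \<equiv> folded_gen N E F n b"
abbreviation "f_hat \<equiv> folded_gen N F E n c"

lemma e_hat_top: "e_hat n = msub (E n) (msmul b Etop)" by (simp add: folded_gen_def)
lemma f_hat_top: "f_hat n = msub (F n) (msmul c Ftop)" by (simp add: folded_gen_def)
lemma e_hat_lower: "i \<noteq> n \<Longrightarrow> e_hat i = msub (E i) (F (n + i))" by (simp add: folded_gen_def)
lemma f_hat_lower: "i \<noteq> n \<Longrightarrow> f_hat i = msub (F i) (E (n + i))" by (simp add: folded_gen_def)

lemma br_F_Ftop: "k \<in> {1..<N} \<Longrightarrow> br N (F k) Ftop = mzero" using folding.br_E_Etop[OF folding_swap] .
lemma br_E_Ftop_mid: "2 \<le> k \<Longrightarrow> k \<le> N - 2 \<Longrightarrow> br N (E k) Ftop = mzero"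
  using folding.br_F_Etop_mid[OF folding_swap] .
lemma br_E1_E1_Ftop: "br N (E 1) (br N (E 1) Ftop) = mzero"
  using folding.br_F1_F1_Etop[OF folding_swap] .

lemma br_Etop_E: "k \<in> {1..<N} \<Longrightarrow> br N Etop (E k) = mzero"
  by (rule br_eq_mzero_commute, rule br_E_Etop)
lemma br_Etop_F_mid: "2 \<le> k \<Longrightarrow> k \<le> N - 2 \<Longrightarrow> br N Etop (F k) = mzero"
  by (rule br_eq_mzero_commute, rule br_F_Etop_mid)
lemma br_Etop_Flast: "br N Etop (F (N - 1)) = chain_br N E 1 (N - 3)"
  by (subst br_antisym) (simp add: br_Flast_Etop)

lemma br_e_hat_f_hat_lower: "1 \<le> i \<Longrightarrow> i < n \<Longrightarrow>
   br N (e_hat i) (f_hat i) = msub (coroot N E F i) (coroot N E F (n + i))"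
proof -
  assume i: "1 \<le> i" "i < n"
  have 1: "br N (E i) (E (n + i)) = mzero" using i N_eq_2n by (intro br_E_E_far) auto
  have 2: "br N (F (n + i)) (F i) = mzero" using i N_eq_2n by (intro br_F_F_far) auto
  show ?thesis using i
    by (simp add: e_hat_lower f_hat_lower 1 2 br_F_E_self coroot_def[of N E F i, symmetric])
qed

lemma br_e_hat_f_hat_top: "br N (e_hat n) (f_hat n) = madd (coroot N E F n) Htop"
proof -
  have 1: "br N (E n) Ftop = mzero" using N_eq_2n n_ge_3 by (intro br_E_Ftop_mid) auto
  have 2: "br N Etop (F n) = mzero" using N_eq_2n n_ge_3 by (intro br_Etop_F_mid) auto
  show ?thesis
    by (simp add: e_hat_top f_hat_top 1 2 coroot_def[of N E F n, symmetric] br_Etop_Ftop)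
       (simp add: mat_defs fun_eq_iff bc_eq_1 mult.commute[of c b]
        flip: mult.assoc[of b c])
qed

lemma theta_pairing_eq: "k \<ge> 1 \<Longrightarrow>
   theta_pairing k = (if k = 1 then 1 else 0) + (if k = n + (n - 1) then 1 else 0)"
  unfolding theta_pairing_def using N_eq_2n n_ge_3 by auto

lemma e_hat_eigen_lower:
  assumes il: "1 \<le> i" "i < n" and j: "j \<in> {1..n}"
  shows "br N (br N (e_hat i) (f_hat i)) (e_hat j) = msmul (of_int (Mn n i j)) (e_hat j)"
proof -
  have H: "br N (e_hat i) (f_hat i) = msub (coroot N E F i) (coroot N E F (n + i))"
    using br_e_hat_f_hat_lower il .
  show ?thesis
  proof (cases "j = n")
    case False
    then have jl: "1 \<le> j" "j < n" using j by auto
    have a: "br N (coroot N E F i) (E j) = msmul (of_int (cartanA i j)) (E j)"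
      using il jl N_eq_2n by (intro coroot_br_E) auto
    have b: "br N (coroot N E F (n+i)) (E j) = msmul (of_int (cartanA (n+i) j)) (E j)"
      using il jl N_eq_2n by (intro coroot_br_E) auto
    have c: "br N (coroot N E F i) (F (n+j)) = msmul (- of_int (cartanA i (n+j))) (F (n+j))"
      using il jl N_eq_2n by (intro coroot_br_F) auto
    have d: "br N (coroot N E F (n+i)) (F (n+j)) = msmul (- of_int (cartanA (n+i) (n+j))) (F (n+j))"
      using il jl N_eq_2n by (intro coroot_br_F) auto
    have v: "cartanA (n+i) j = 0" "cartanA i (n+j) = 0" "cartanA (n+i) (n+j) = cartanA i j"
       "Mn n i j = cartanA i j"
      using il jl by (auto simp: cartanA_def Mn_def)
    show ?thesis unfolding H using il jl
      by (simp add: e_hat_lower a b c d v) (simp add: mat_defs fun_eq_iff algebra_simps)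
  next
    case True
    have a: "br N (coroot N E F i) (E n) = msmul (of_int (cartanA i n)) (E n)"
      using il N_eq_2n by (intro coroot_br_E) auto
    have b: "br N (coroot N E F (n+i)) (E n) = msmul (of_int (cartanA (n+i) n)) (E n)"
      using il N_eq_2n by (intro coroot_br_E) auto
    have c: "br N (coroot N E F i) Etop = msmul (theta_pairing i) Etop"
      using il N_eq_2n by (intro coroot_br_Etop) auto
    have d: "br N (coroot N E F (n+i)) Etop = msmul (theta_pairing (n+i)) Etop"
      using il N_eq_2n by (intro coroot_br_Etop) auto
    have v: "cartanA i n = (if i = n - 1 then -1 else 0)" "cartanA (n+i) n = (if i = 1 then -1 else 0)"
       "theta_pairing i = (if i = 1 then 1 else 0)" "theta_pairing (n+i) = (if i = n - 1 then 1 else 0)"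
       "Mn n i n = (if i = 1 then 1 else if i = n - 1 then -1 else 0)"
      using il n_ge_3 by (auto simp: cartanA_def Mn_def theta_pairing_eq)
    have ne: "i = 1 \<Longrightarrow> i \<noteq> n - 1" using n_ge_3 by auto
    show ?thesis using True ne
      by (simp add: H e_hat_top a b c d v) (auto simp: mat_defs fun_eq_iff algebra_simps)
  qed
qed

lemma e_hat_eigen_top:
  assumes j: "j \<in> {1..n}"
  shows "br N (br N (e_hat n) (f_hat n)) (e_hat j) = msmul (of_int (Mn n n j)) (e_hat j)"
proof -
  show ?thesis
  proof (cases "j = n")
    case False
    then have jl: "1 \<le> j" "j < n" using j by auto
    have a: "br N (coroot N E F n) (E j) = msmul (of_int (cartanA n j)) (E j)"
      using jl N_eq_2n by (intro coroot_br_E) auto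
    have b: "br N Htop (E j) = msmul (theta_pairing j) (E j)"
      using jl N_eq_2n by (intro Htop_br_E) auto
    have c: "br N (coroot N E F n) (F (n+j)) = msmul (- of_int (cartanA n (n+j))) (F (n+j))"
      using jl N_eq_2n by (intro coroot_br_F) auto
    have d: "br N Htop (F (n+j)) = msmul (- theta_pairing (n+j)) (F (n+j))"
      using jl N_eq_2n by (intro Htop_br_F) auto
    have v: "cartanA n j = (if j = n - 1 then -1 else 0)" "cartanA n (n+j) = (if j = 1 then -1 else 0)"
       "theta_pairing j = (if j = 1 then 1 else 0)" "theta_pairing (n+j) = (if j = n - 1 then 1 else 0)"
       "Mn n n j = (if j = 1 then 1 else if j = n - 1 then -1 else 0)"
      using jl n_ge_3 by (auto simp: cartanA_def Mn_def theta_pairing_eq)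
    have ne: "j = 1 \<Longrightarrow> j \<noteq> n - 1" using n_ge_3 by auto
    show ?thesis unfolding br_e_hat_f_hat_top using False ne
      by (simp add: e_hat_lower a b c d v) (auto simp: mat_defs fun_eq_iff algebra_simps)
  next
    case jn: True
    have a: "br N (coroot N E F n) (E n) = msmul 2 (E n)"
      using coroot_br_E[of n n] N_eq_2n n_ge_3 by (simp add: cartanA_def)
    have cwn: "theta_pairing n = 0" using n_ge_3 by (simp add: theta_pairing_eq)
    have nI: "n \<in> {1..<N}" using N_eq_2n n_ge_3 by simp
    have b: "br N Htop (E n) = mzero" using Htop_br_E[OF nI] by (simp add: cwn)
    have c: "br N (coroot N E F n) Etop = mzero" using coroot_br_Etop[OF nI] by (simp add: cwn)
    have v: "Mn n n n = 2" by (simp add: Mn_def)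
    show ?thesis unfolding jn br_e_hat_f_hat_top
      by (simp add: e_hat_top a b c v Htop_br_Etop) (simp add: mat_defs fun_eq_iff algebra_simps)
  qed
qed

lemma e_hat_eigen:
  assumes "i \<in> {1..n}" and "j \<in> {1..n}"
  shows "br N (br N (e_hat i) (f_hat i)) (e_hat j) = msmul (of_int (Mn n i j)) (e_hat j)"
  using assms e_hat_eigen_lower[of i j] e_hat_eigen_top[of j] by (cases "i = n") auto

lemma br_e_hat_f_hat:
  assumes i: "i \<in> {1..n}" and j: "j \<in> {1..n}" and ij: "i \<noteq> j" and M: "Mn n i j \<le> 0"
  shows "br N (e_hat i) (f_hat j) = mzero"
proof -
  have nb: "\<not> (i = 1 \<and> j = n)" "\<not> (i = n \<and> j = 1)" using M n_ge_3 by (auto simp: Mn_def)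
  show ?thesis
  proof (cases "i = n")
    case False
    show ?thesis
    proof (cases "j = n")
      case False
      have 1: "br N (E i) (F j) = mzero" using i j ij N_eq_2n by (intro br_E_F) auto
      have 2: "br N (E i) (E (n + j)) = mzero"
        using i j False \<open>i \<noteq> n\<close> N_eq_2n by (intro br_E_E_far) auto
      have 3: "br N (F (n + i)) (F j) = mzero"
        using i j False \<open>i \<noteq> n\<close> N_eq_2n by (intro br_F_F_far) auto
      have 4: "br N (F (n + i)) (E (n + j)) = mzero"
        using i j ij False \<open>i \<noteq> n\<close> N_eq_2n by (intro br_F_E) auto
      show ?thesis using False \<open>i \<noteq> n\<close> by (simp add: e_hat_lower f_hat_lower 1 2 3 4)
    next
      case True
      have 1: "br N (E i) (F n) = mzero" using i ij True N_eq_2n by (intro br_E_F) auto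
      have 2: "br N (E i) Ftop = mzero"
        using i nb True \<open>i \<noteq> n\<close> N_eq_2n by (intro br_E_Ftop_mid) auto
      have 3: "br N (F (n + i)) (F n) = mzero"
        using i nb True \<open>i \<noteq> n\<close> N_eq_2n by (intro br_F_F_far) auto
      have 4: "br N (F (n + i)) Ftop = mzero" using i True \<open>i \<noteq> n\<close> N_eq_2n by (intro br_F_Ftop) auto
      show ?thesis using True \<open>i \<noteq> n\<close> by (simp add: e_hat_lower f_hat_top 1 2 3 4)
    qed
  next
    case True
    then have jn: "j \<noteq> n" using ij by simp
    have 1: "br N (E n) (F j) = mzero" using j ij True N_eq_2n by (intro br_E_F) auto
    have 2: "br N (E n) (E (n + j)) = mzero" using j nb True jn N_eq_2n by (intro br_E_E_far) auto
    have 3: "br N Etop (F j) = mzero" using j nb True jn N_eq_2n by (intro br_Etop_F_mid) auto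
    have 4: "br N Etop (E (n + j)) = mzero" using j jn N_eq_2n by (intro br_Etop_E) auto
    show ?thesis using True jn by (simp add: e_hat_top f_hat_lower 1 2 3 4)
  qed
qed

lemma br_e_hat_e_hat_nonadj:
  assumes i: "i \<in> {1..n}" and j: "j \<in> {1..n}" and ij: "i \<noteq> j" and nadj: "\<not> (i = j + 1 \<or> j = i + 1)"
  shows "br N (e_hat i) (e_hat j) = mzero"
proof (cases "i = n")
  case False
  show ?thesis
  proof (cases "j = n")
    case False
    have 1: "br N (E i) (E j) = mzero" using i j ij nadj N_eq_2n by (intro br_E_E_far) auto
    have 2: "br N (E i) (F (n + j)) = mzero" using i j False N_eq_2n by (intro br_E_F) auto
    have 3: "br N (F (n + i)) (E j) = mzero" using i j \<open>i \<noteq> n\<close> N_eq_2n by (intro br_F_E) auto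
    have 4: "br N (F (n + i)) (F (n + j)) = mzero" using i j ij nadj N_eq_2n False \<open>i \<noteq> n\<close>
      by (intro br_F_F_far) auto
    show ?thesis using False \<open>i \<noteq> n\<close> by (simp add: e_hat_lower 1 2 3 4)
  next
    case True
    have 1: "br N (E i) (E n) = mzero" using i ij nadj True N_eq_2n by (intro br_E_E_far) auto
    have 2: "br N (E i) Etop = mzero" using i N_eq_2n by (intro br_E_Etop) auto
    have 3: "br N (F (n + i)) (E n) = mzero" using i \<open>i \<noteq> n\<close> N_eq_2n by (intro br_F_E) auto
    have 4: "br N (F (n + i)) Etop = mzero"
      using i nadj True \<open>i \<noteq> n\<close> N_eq_2n by (intro br_F_Etop_mid) auto
    show ?thesis using True \<open>i \<noteq> n\<close> by (simp add: e_hat_lower e_hat_top 1 2 3 4)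
  qed
next
  case True
  then have jn: "j \<noteq> n" using ij by simp
  have 1: "br N (E n) (E j) = mzero" using j ij nadj True N_eq_2n by (intro br_E_E_far) auto
  have 2: "br N (E n) (F (n + j)) = mzero" using j jn N_eq_2n by (intro br_E_F) auto
  have 3: "br N Etop (E j) = mzero" using j N_eq_2n by (intro br_Etop_E) auto
  have 4: "br N Etop (F (n + j)) = mzero" using j nadj True jn N_eq_2n by (intro br_Etop_F_mid) auto
  show ?thesis using True jn by (simp add: e_hat_lower e_hat_top 1 2 3 4)
qed

lemma serre_e_hat_adj:
  assumes i: "i \<in> {1..n}" and j: "j \<in> {1..n}" and adj: "i = j + 1 \<or> j = i + 1"
  shows "br N (e_hat i) (br N (e_hat i) (e_hat j)) = mzero"
proof (cases "i = n")
  case False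
  show ?thesis
  proof (cases "j = n")
    case False
    let ?p = "n + i" and ?q = "n + j"
    have 1: "br N (E i) (F ?q) = mzero" using i j False \<open>i \<noteq> n\<close> N_eq_2n by (intro br_E_F) auto
    have 2: "br N (F ?p) (E j) = mzero" using i j False \<open>i \<noteq> n\<close> N_eq_2n by (intro br_F_E) auto
    have 3: "br N (E i) (br N (E i) (E j)) = mzero"
      using i j adj N_eq_2n by (intro serre_E_adj) auto
    have 4: "br N (E i) (br N (F ?p) (F ?q)) = mzero" using i j False \<open>i \<noteq> n\<close> N_eq_2n
      by (intro br_br_eq_mzero br_E_F) auto
    have 5: "br N (F ?p) (br N (E i) (E j)) = mzero" using i j adj \<open>i \<noteq> n\<close> N_eq_2n
      by (intro br_br_eq_mzero br_F_E) auto
    have 6: "br N (F ?p) (br N (F ?p) (F ?q)) = mzero" using i j adj False \<open>i \<noteq> n\<close> N_eq_2n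
      by (intro serre_F_adj) auto
    show ?thesis using False \<open>i \<noteq> n\<close> by (simp add: e_hat_lower 1 2 3 4 5 6)
  next
    case True
    then have "i = n - 1" using adj \<open>i \<noteq> n\<close> i by auto
    let ?L = "chain_br N E 1 (N - 3)"
    have ei: "e_hat i = msub (E (n - 1)) (F (N - 1))"
      using \<open>i = n - 1\<close> n_ge_3 N_arith(4) by (simp add: e_hat_lower)
    have 1: "br N (E (n - 1)) Etop = mzero" using n_ge_3 N_eq_2n by (intro br_E_Etop) auto
    have 2: "br N (F (N - 1)) (E n) = mzero" using n_ge_3 N_eq_2n by (intro br_F_E) auto
    have 3: "br N (E (n - 1)) (br N (E (n - 1)) (E n)) = mzero"
      using n_ge_3 N_eq_2n by (intro serre_E_adj) auto
    have 4: "br N (E (n - 1)) ?L = mzero" using n_ge_3 N_eq_2n by (intro br_E_chain_prev) auto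
    have 5: "br N (F (N - 1)) (br N (E (n - 1)) (E n)) = mzero"
      using n_ge_3 N_eq_2n by (intro br_br_eq_mzero br_F_E) auto
    show ?thesis unfolding ei True e_hat_top
      by (simp add: 1 2 3 4 5 br_Flast_Etop br_Flast_chain_prev)
  qed
next
  case True
  then have "j = n - 1" using adj j by auto
  let ?L = "chain_br N E 1 (N - 3)"
  have ej: "e_hat j = msub (E (n - 1)) (F (N - 1))"
    using \<open>j = n - 1\<close> n_ge_3 N_arith(4) by (simp add: e_hat_lower)
  have 1: "br N (E n) (F (N - 1)) = mzero" using n_ge_3 N_eq_2n by (intro br_E_F) auto
  have 2: "br N Etop (E (n - 1)) = mzero" using n_ge_3 N_eq_2n by (intro br_Etop_E) auto
  have 3: "br N (E n) (br N (E n) (E (n - 1))) = mzero"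
    using n_ge_3 N_eq_2n by (intro serre_E_adj) auto
  have 4: "br N (E n) ?L = mzero" using n_ge_3 N_eq_2n by (intro br_E_chain_prev) auto
  have 5: "br N Etop (br N (E n) (E (n - 1))) = mzero"
    using n_ge_3 N_eq_2n by (intro br_br_eq_mzero br_Etop_E) auto
  show ?thesis unfolding ej True e_hat_top
    by (simp add: 1 2 3 4 5 br_Etop_Flast br_Etop_chain_prev)
qed

lemma serre_e_hat:
  assumes i: "i \<in> {1..n}" and j: "j \<in> {1..n}" and ij: "i \<noteq> j" and M: "Mn n i j \<le> 0"
  shows "((br N (e_hat i)) ^^ nat (1 - Mn n i j)) (e_hat j) = mzero"
proof (cases "i = j + 1 \<or> j = i + 1")
  case True
  then have "nat (1 - Mn n i j) = 2" by (auto simp: Mn_def)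
  then show ?thesis using serre_e_hat_adj[OF i j True] by (simp add: funpow_br_2)
next
  case False
  then have "nat (1 - Mn n i j) = 1" using ij M n_ge_3 by (auto simp: Mn_def split: if_splits)
  then show ?thesis using br_e_hat_e_hat_nonadj[OF i j ij False] by (simp add: funpow_br_1)
qed

lemma Mn_pos_cases:
  assumes "i \<in> {1..n}" "j \<in> {1..n}" "i \<noteq> j" "Mn n i j > 0"
  shows "(i = 1 \<and> j = n \<or> i = n \<and> j = 1) \<and> Mn n i j = 1"
  using assms n_ge_3 by (auto simp: Mn_def split: if_splits)

lemma br_e_hat_e_hat_corner:
  assumes i: "i \<in> {1..n}" and j: "j \<in> {1..n}" and ij: "i \<noteq> j" and M: "Mn n i j > 0"
  shows "br N (e_hat i) (e_hat j) = mzero"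
  using Mn_pos_cases[OF assms] n_ge_3 by (intro br_e_hat_e_hat_nonadj[OF i j ij]) auto

lemma serre_e_hat_f_hat_corner:
  assumes i: "i \<in> {1..n}" and j: "j \<in> {1..n}" and ij: "i \<noteq> j" and M: "Mn n i j > 0"
  shows "((br N (e_hat i)) ^^ nat (Mn n i j + 1)) (f_hat j) = mzero"
proof -
  have n1: "n \<noteq> 1" using n_ge_3 by simp
  have Mv: "nat (Mn n i j + 1) = 2" using Mn_pos_cases[OF assms] by simp
  consider "i = 1" "j = n" | "i = n" "j = 1" using Mn_pos_cases[OF assms] by blast
  then show ?thesis
  proof cases
    case 1
    have a: "br N (E 1) (F n) = mzero" using n_ge_3 N_eq_2n by (intro br_E_F) auto
    have b: "br N (F (n + 1)) Ftop = mzero" using n_ge_3 N_eq_2n by (intro br_F_Ftop) auto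
    have c: "br N (E 1) (br N (F (n + 1)) (F n)) = mzero"
      using n_ge_3 N_eq_2n by (intro br_br_eq_mzero br_E_F) auto
    have d: "br N (F (n + 1)) (br N (E 1) Ftop) = mzero"
      using n_ge_3 N_eq_2n by (intro br_br_eq_mzero br_F_E br_F_Ftop) auto
    have e: "br N (F (n + 1)) (br N (F (n + 1)) (F n)) = mzero"
      using n_ge_3 N_eq_2n by (intro serre_F_adj) auto
    show ?thesis unfolding Mv funpow_br_2 using 1 n1
      by (simp add: e_hat_lower f_hat_top a b c d e br_E1_E1_Ftop)
  next
    case 2
    have a: "br N (E n) (F 1) = mzero" using n_ge_3 N_eq_2n by (intro br_E_F) auto
    have b: "br N Etop (E (n + 1)) = mzero" using n_ge_3 N_eq_2n by (intro br_Etop_E) auto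
    have c: "br N (E n) (br N Etop (F 1)) = mzero"
      using n_ge_3 N_eq_2n by (intro br_br_eq_mzero br_E_Etop br_E_F) auto
    have d: "br N Etop (br N (E n) (E (n + 1))) = mzero"
      using n_ge_3 N_eq_2n by (intro br_br_eq_mzero br_Etop_E) auto
    have e: "br N (E n) (br N (E n) (E (n + 1))) = mzero"
      using n_ge_3 N_eq_2n by (intro serre_E_adj) auto
    show ?thesis unfolding Mv funpow_br_2 using 2 n1
      by (simp add: e_hat_top f_hat_lower a b c d e br_Etop_Etop_F1)
  qed
qed

lemma sl_e_hat: "i \<in> {1..n} \<Longrightarrow> e_hat i \<in> sl N"
  using N_eq_2n n_ge_3 sl_E sl_F chain_br_sl[of 1 "N - 2" E N]
  by (auto simp: folded_gen_def intro!: sl_msub sl_msmul)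

lemma gim_hom_folded: "gim_hom n N (eval_lterm N (gen_assignment N n e_hat f_hat))"
proof (rule gim_hom_eval_gen_assignment)
  fix i j assume ij: "i \<in> {1..n}" "j \<in> {1..n}"
  show "e_hat i \<in> sl N \<and> f_hat i \<in> sl N"
    using sl_e_hat folding.sl_e_hat[OF folding_swap] ij by blast
  show "br N (br N (e_hat i) (f_hat i)) (e_hat j) = msmul (of_int (Mn n i j)) (e_hat j)"
    using e_hat_eigen[OF ij] .
  show "br N (br N (e_hat i) (f_hat i)) (f_hat j) = msmul (- of_int (Mn n i j)) (f_hat j)"
    using folding.e_hat_eigen[OF folding_swap ij] by (subst br_antisym) simp
  assume "i \<noteq> j"
  note ij' = ij this
  { assume M: "Mn n i j \<le> 0"
    show "br N (e_hat i) (f_hat j) = mzero" using br_e_hat_f_hat[OF ij' M] .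
    show "br N (f_hat i) (e_hat j) = mzero" using folding.br_e_hat_f_hat[OF folding_swap ij' M] .
    show "((br N (e_hat i)) ^^ nat (1 - Mn n i j)) (e_hat j) = mzero" using serre_e_hat[OF ij' M] .
    show "((br N (f_hat i)) ^^ nat (1 - Mn n i j)) (f_hat j) = mzero"
      using folding.serre_e_hat[OF folding_swap ij' M] . }
  { assume M: "Mn n i j > 0"
    show "br N (e_hat i) (e_hat j) = mzero" using br_e_hat_e_hat_corner[OF ij' M] .
    show "br N (f_hat i) (f_hat j) = mzero"
      using folding.br_e_hat_e_hat_corner[OF folding_swap ij' M] .
    show "((br N (e_hat i)) ^^ nat (Mn n i j + 1)) (f_hat j) = mzero"
      using serre_e_hat_f_hat_corner[OF ij' M] .
    show "((br N (f_hat i)) ^^ nat (Mn n i j + 1)) (e_hat j) = mzero"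
      using folding.serre_e_hat_f_hat_corner[OF folding_swap ij' M] . }
qed

end

theorem lemma2p2:
  fixes n :: nat and a :: complex and E F :: "nat \<Rightarrow> cmat"
  assumes "n \<ge> 3"
    and "a \<noteq> 0" and "a \<noteq> 1" and "a \<noteq> -1"
    and "chevalley_gens (2 * n) E F"
  shows "\<exists>\<phi>. gim_hom n (2 * n) \<phi> \<and>
           (\<forall>i\<in>{1..n}.
              \<phi> (Gen (Ge i)) =
                msub (E i) (if n + i = 2 * n then msmul (inverse a) (lnest (2 * n) E (2 * n - 1))
                            else F (n + i)) \<and>
              \<phi> (Gen (Gf i)) =
                msub (F i) (if n + i = 2 * n then msmul a (rnest (2 * n) F (2 * n - 1))
                            else E (n + i)))"
proof -
  interpret folding "2 * n" E F n "inverse a" a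
    using assms(1,2,5) by (simp add: folding_def folding_axioms_def chevalley_if_gens)
  have top: "2 * n - 1 = Suc (2 * n - 2)" "even (2 * n - 2)"
    using assms(1) by simp_all
  show ?thesis
    using gim_hom_folded
    by (intro exI[of _ "eval_lterm (2 * n) (gen_assignment (2 * n) n e_hat f_hat)"])
       (auto simp: gen_assignment_def folded_gen_def top lnest_eq_chain_br rnest_eq_chain_br)
qed

end
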